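(* (Destructor to consumer case.) Let $P$ be a FOOD program with global context $\Delta$, translated by $\Delta;\Gamma\vdash P\Rightarrow T_0\leadsto P'$, with $P'$ having global context $\Delta'$ (components written with a prime). If $C\in\textsc{Gen}(D)$, $f\in\textsc{Dtr}(D)$, $\textsc{dtrBody}(f,C)=(\overline y,\overline x,e)$ and $\Delta;\Gamma\vdash e\Rightarrow T\leadsto e'$, then $C\in\textsc{Ctr}'(D)$, $f\in\textsc{Csm}'(D)$ and $\textsc{csmBody}'(f,C)=(\overline y,\overline x,[\texttt{this}\mapsto\texttt{self}]e')$.
   Context: FOOD programs consist of definitions followed by an expression. Definitions: datatypes $\texttt{data}\ D$; interfaces $\texttt{interface}\ D\{\overline{Dtr}\}$ with destructors (declarations $\texttt{def}\ f(\overline{x:T}):T$ or functions $\texttt{def}\ f(\overline{x:T}):T=e$ giving a default body); constructors $\texttt{case}\ C(\overline{x:T})\ \texttt{extends}\ D$; generators $\texttt{class}\ C(\overline{x:T})\ \texttt{implements}\ D\{\overline{Fun}\}$; consumers $\texttt{def}\ f(\texttt{self}:D)(\overline{x:T}):T=\overline{\texttt{case}\ P\Rightarrow e}$ with patterns $C(\overline x)$ or $\_$. Global context: $\textsc{Ctr}(D)$, $\textsc{Gen}(D)$, $\textsc{Dtr}(D)$, $\textsc{Csm}(D)$ the constructors, generators, destructors and consumers of $D$. Lookups: $\textsc{dtrBody}(f,C)=(\overline y,\overline x,e)$ if $\texttt{class}\ C(\overline{y:T})\ \texttt{implements}\ D$ contains $\texttt{def}\ f(\overline{x:T}):T=e$,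 and $(\varnothing,\overline x,e)$ if instead interface $D$ contains $\texttt{def}\ f(\overline{x:T}):T=e$; $\textsc{csmBody}(f,C)=(\overline y,\overline x,e)$ if consumer $f$ has clause $\texttt{case}\ C(\overline y)\Rightarrow e$, and $(\varnothing,\overline x,e)$ if it has clause $\texttt{case}\ \_\Rightarrow e$. $[a\mapsto b]e$ is substitution. The translation $\Delta;\Gamma\vdash\cdot\Rightarrow T\leadsto\cdot$ maps each transformed interface $D$ to $\texttt{data}\ D$ with, for each destructor $\texttt{def}\ f(\overline{x:T}):T[=e_0]$, a consumer $\texttt{def}\ f(\texttt{self}:D)(\overline{x:T}):T$ whose clauses are $\texttt{case}\ C(\overline y)\Rightarrow[\texttt{this}\mapsto\texttt{self}]e'$ for each generator $C(\overline{y:S})$ of $D$ containing $\texttt{def}\ f(\overline{x:T}):T=e$ where $\Gamma,\overline{y:S},\overline{x:T}\vdash e\Rightarrow T\leadsto e'$ (rule Fun2Case), plus, when the default $e_0$ exists, $\texttt{case}\ \_\Rightarrow[\texttt{this}\mapsto\texttt{self}]e_0'$ with $\Gamma,\overline{x:T}\vdash e_0\Rightarrow T\leadsto e_0'$ (rule Fun2Csm); generators of $D$ become constructors $\texttt{case}\ C(\overline{x:T})\ \texttt{extends}\ D$. Expressions are translated type-directedly: destructor selections $e_1.f(\overline{e_2})$ on transformed interfaces become consumer applications $f(e_1')(\overline{e_2'})$, consumer applications on transformed datatypes become selections, $\texttt{new}\ C(\overline e)$ becomes $C(\overline{e'})$ for generators of transformed interfaces and $C(\overline e)$ becomes $\texttt{new}\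 C(\overline{e'})$ for constructors of transformed datatypes; other forms translate subexpressions only. *)

theory Defs
  imports Main
begin

type_synonym name = string
type_synonym var = string
type_synonym ty = string     \<comment> \<open>types are type names D\<close>

datatype exp =
    Var var                       \<comment> \<open>variable (including this / self)\<close>
  | Sel exp name "exp list"       \<comment> \<open>destructor selection  e.f(es)\<close>
  | App name exp "exp list"       \<comment> \<open>consumer application  f(e)(es)\<close>
  | New name "exp list"           \<comment> \<open>new C(es)\<close>
  | Con name "exp list"           \<comment> \<open>constructor call C(es)\<close>

definition thisv :: var where "thisv = ''this''"
definition selfv :: var where "selfv = ''self''"

datatype dtr =
    DtrDecl name "(var \<times> ty) list" ty        \<comment> \<open>def f(xs:T):T\<close>
  | DtrDef name "(var \<times> ty) list" ty exp    \<comment> \<open>def f(xs:T):T = e (default body)\<close>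

type_synonym fundef = "name \<times> (var \<times> ty) list \<times> ty \<times> exp"  \<comment> \<open>def f(xs:T):T = e\<close>

datatype pat = PCon name "var list" | PWild

datatype def =
    DData name                                                   \<comment> \<open>data D\<close>
  | DIface name "dtr list"                                       \<comment> \<open>interface D {Dtr}\<close>
  | DCtor name "(var \<times> ty) list" name                           \<comment> \<open>case C(xs:T) extends D\<close>
  | DGen name "(var \<times> ty) list" name "fundef list"              \<comment> \<open>class C(xs:T) implements D {Fun}\<close>
  | DCsm name name "(var \<times> ty) list" ty "(pat \<times> exp) list"     \<comment> \<open>def f(self:D)(xs:T):T = cases\<close>

type_synonym prog = "def list \<times> exp"
type_synonym gctx = "def list"
type_synonym ctx = "var \<Rightarrow> ty option"

fun dtr_name :: "dtr \<Rightarrow> name" where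
  "dtr_name (DtrDecl f _ _) = f" | "dtr_name (DtrDef f _ _ _) = f"
fun dtr_params :: "dtr \<Rightarrow> (var \<times> ty) list" where
  "dtr_params (DtrDecl _ xs _) = xs" | "dtr_params (DtrDef _ xs _ _) = xs"
fun dtr_ret :: "dtr \<Rightarrow> ty" where
  "dtr_ret (DtrDecl _ _ T) = T" | "dtr_ret (DtrDef _ _ T _) = T"

definition defs :: "prog \<Rightarrow> gctx" where "defs P = fst P"

definition Ctr :: "gctx \<Rightarrow> name \<Rightarrow> name set" where
  "Ctr \<Delta> D = {C. \<exists>ps. DCtor C ps D \<in> set \<Delta>}"
definition Gen :: "gctx \<Rightarrow> name \<Rightarrow> name set" where
  "Gen \<Delta> D = {C. \<exists>ps fs. DGen C ps D fs \<in> set \<Delta>}"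
definition Dtr :: "gctx \<Rightarrow> name \<Rightarrow> name set" where
  "Dtr \<Delta> D = {f. \<exists>dtrs. DIface D dtrs \<in> set \<Delta> \<and> f \<in> dtr_name ` set dtrs}"
definition Csm :: "gctx \<Rightarrow> name \<Rightarrow> name set" where
  "Csm \<Delta> D = {f. \<exists>xs T cls. DCsm f D xs T cls \<in> set \<Delta>}"

fun gen_info :: "name \<Rightarrow> def \<Rightarrow> ((var \<times> ty) list \<times> name \<times> fundef list) list" where
  "gen_info C (DGen C' ps D fs) = (if C' = C then [(ps, D, fs)] else [])"
| "gen_info C _ = []"

fun iface_info :: "name \<Rightarrow> def \<Rightarrow> dtr list list" where
  "iface_info D (DIface D' dtrs) = (if D' = D then [dtrs] else [])"
| "iface_info D _ = []"

fun csm_info :: "name \<Rightarrow> def \<Rightarrow> (name \<times> (var \<times> ty) list \<times> ty \<times> (pat \<times> exp) list) list" where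
  "csm_info f (DCsm f' D xs T cls) = (if f' = f then [(D, xs, T, cls)] else [])"
| "csm_info f _ = []"

definition find_gen :: "gctx \<Rightarrow> name \<Rightarrow> ((var \<times> ty) list \<times> name \<times> fundef list) option" where
  "find_gen \<Delta> C = (case concat (map (gen_info C) \<Delta>) of [] \<Rightarrow> None | x # _ \<Rightarrow> Some x)"
definition find_iface :: "gctx \<Rightarrow> name \<Rightarrow> dtr list option" where
  "find_iface \<Delta> D = (case concat (map (iface_info D) \<Delta>) of [] \<Rightarrow> None | x # _ \<Rightarrow> Some x)"
definition find_csm :: "gctx \<Rightarrow> name \<Rightarrow> (name \<times> (var \<times> ty) list \<times> ty \<times> (pat \<times> exp) list) option" where
  "find_csm \<Delta> f = (case concat (map (csm_info f) \<Delta>) of [] \<Rightarrow> None | x # _ \<Rightarrow> Some x)"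

definition find_fun :: "name \<Rightarrow> fundef list \<Rightarrow> fundef option" where
  "find_fun f fs = find (\<lambda>(g, _, _, _). g = f) fs"

fun is_pcon :: "name \<Rightarrow> pat \<Rightarrow> bool" where
  "is_pcon C (PCon C' _) = (C' = C)" | "is_pcon C PWild = False"

definition find_con_clause :: "name \<Rightarrow> (pat \<times> exp) list \<Rightarrow> (pat \<times> exp) option" where
  "find_con_clause C cls = find (\<lambda>(p, _). is_pcon C p) cls"
definition find_wild_clause :: "(pat \<times> exp) list \<Rightarrow> (pat \<times> exp) option" where
  "find_wild_clause cls = find (\<lambda>(p, _). p = PWild) cls"

definition dtrBody :: "gctx \<Rightarrow> name \<Rightarrow> name \<Rightarrow> (var list \<times> var list \<times> exp) option" where
  "dtrBody \<Delta> f C =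
    (case find_gen \<Delta> C of
       None \<Rightarrow> None
     | Some (ps, D, fs) \<Rightarrow>
         (case find_fun f fs of
            Some (_, xs, _, e) \<Rightarrow> Some (map fst ps, map fst xs, e)
          | None \<Rightarrow>
              (case find_iface \<Delta> D of
                 None \<Rightarrow> None
               | Some dtrs \<Rightarrow>
                   (case find (\<lambda>d. dtr_name d = f) dtrs of
                      Some (DtrDef _ xs _ e) \<Rightarrow> Some ([], map fst xs, e)
                    | _ \<Rightarrow> None))))"

definition csmBody :: "gctx \<Rightarrow> name \<Rightarrow> name \<Rightarrow> (var list \<times> var list \<times> exp) option" where
  "csmBody \<Delta> f C =
    (case find_csm \<Delta> f of
       None \<Rightarrow> None
     | Some (D, xs, T, cls) \<Rightarrow>
         (case find_con_clause C cls of
            Some (PCon _ ys, e) \<Rightarrow> Some (ys, map fst xs, e)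
          | _ \<Rightarrow>
              (case find_wild_clause cls of
                 Some (_, e) \<Rightarrow> Some ([], map fst xs, e)
               | None \<Rightarrow> None)))"

fun ren :: "(var \<Rightarrow> var) \<Rightarrow> exp \<Rightarrow> exp" where
  "ren \<rho> (Var x) = Var (\<rho> x)"
| "ren \<rho> (Sel e f es) = Sel (ren \<rho> e) f (map (ren \<rho>) es)"
| "ren \<rho> (App f e es) = App f (ren \<rho> e) (map (ren \<rho>) es)"
| "ren \<rho> (New C es) = New C (map (ren \<rho>) es)"
| "ren \<rho> (Con C es) = Con C (map (ren \<rho>) es)"

definition subst_var :: "var \<Rightarrow> var \<Rightarrow> exp \<Rightarrow> exp" where
  "subst_var a b e = ren (\<lambda>v. if v = a then b else v) e"

definition ext :: "ctx \<Rightarrow> (var \<times> ty) list \<Rightarrow> ctx" where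
  "ext \<Gamma> xs = \<Gamma>(map fst xs [\<mapsto>] map snd xs)"

section \<open>Type-directed translation of expressions (parameterised by the set tr of transformed types)\<close>

inductive texp :: "name set \<Rightarrow> gctx \<Rightarrow> ctx \<Rightarrow> exp \<Rightarrow> ty \<Rightarrow> exp \<Rightarrow> bool" where
  T_Var: "\<Gamma> x = Some T \<Longrightarrow> texp tr \<Delta> \<Gamma> (Var x) T (Var x)"
| T_Sel: "\<lbrakk> texp tr \<Delta> \<Gamma> e1 D e1'; DIface D dtrs \<in> set \<Delta>; d \<in> set dtrs; dtr_name d = f;
           length es = length (dtr_params d);
           length es' = length es \<and> (\<forall>i<length es. texp tr \<Delta> \<Gamma> (es ! i) ((map snd (dtr_params d)) ! i) (es' ! i)) \<rbrakk>
          \<Longrightarrow> texp tr \<Delta> \<Gamma> (Sel e1 f es) (dtr_ret d)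
                (if D \<in> tr then App f e1' es' else Sel e1' f es')"
| T_App: "\<lbrakk> DCsm f D xs T cls \<in> set \<Delta>; texp tr \<Delta> \<Gamma> e1 D e1'; length es = length xs;
           length es' = length es \<and> (\<forall>i<length es. texp tr \<Delta> \<Gamma> (es ! i) ((map snd xs) ! i) (es' ! i)) \<rbrakk>
          \<Longrightarrow> texp tr \<Delta> \<Gamma> (App f e1 es) T
                (if D \<in> tr then Sel e1' f es' else App f e1' es')"
| T_New: "\<lbrakk> DGen C ps D fs \<in> set \<Delta>; length es = length ps;
           length es' = length es \<and> (\<forall>i<length es. texp tr \<Delta> \<Gamma> (es ! i) ((map snd ps) ! i) (es' ! i)) \<rbrakk>
          \<Longrightarrow> texp tr \<Delta> \<Gamma> (New C es) D (if D \<in> tr then Con C es' else New C es')"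
| T_Con: "\<lbrakk> DCtor C ps D \<in> set \<Delta>; length es = length ps;
           length es' = length es \<and> (\<forall>i<length es. texp tr \<Delta> \<Gamma> (es ! i) ((map snd ps) ! i) (es' ! i)) \<rbrakk>
          \<Longrightarrow> texp tr \<Delta> \<Gamma> (Con C es) D (if D \<in> tr then New C es' else Con C es')"

fun def_names :: "def \<Rightarrow> name list" where
  "def_names (DData D) = [D]"
| "def_names (DIface D dtrs) = D # map dtr_name dtrs"
| "def_names (DCtor C _ _) = [C]"
| "def_names (DGen C _ _ _) = [C]"
| "def_names (DCsm f _ _ _ _) = [f]"

definition wf_gctx :: "gctx \<Rightarrow> bool" where
  "wf_gctx \<Delta> = distinct (concat (map def_names \<Delta>))"

fun gen_of :: "name \<Rightarrow> def \<Rightarrow> (name \<times> (var \<times> ty) list \<times> fundef list) list" where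
  "gen_of D (DGen C ps D' fs) = (if D' = D then [(C, ps, fs)] else [])"
| "gen_of D _ = []"

fun csm_of :: "name \<Rightarrow> def \<Rightarrow> (name \<times> (var \<times> ty) list \<times> ty \<times> (pat \<times> exp) list) list" where
  "csm_of D (DCsm f D' xs T cls) = (if D' = D then [(f, xs, T, cls)] else [])"
| "csm_of D _ = []"

definition gens_with :: "gctx \<Rightarrow> name \<Rightarrow> name \<Rightarrow> (name \<times> (var \<times> ty) list \<times> fundef) list" where
  "gens_with \<Delta> D f =
     concat (map (\<lambda>(C, ps, fs). case find_fun f fs of None \<Rightarrow> [] | Some fd \<Rightarrow> [(C, ps, fd)])
                 (concat (map (gen_of D) \<Delta>)))"

definition csms_with :: "gctx \<Rightarrow> name \<Rightarrow> name \<Rightarrow> (name \<times> (var \<times> ty) list \<times> ty \<times> var list \<times> exp) list" where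
  "csms_with \<Delta> D C =
     concat (map (\<lambda>(f, xs, T, cls). case find_con_clause C cls of
                     Some (PCon _ ys, e) \<Rightarrow> [(f, xs, T, ys, e)] | _ \<Rightarrow> [])
                 (concat (map (csm_of D) \<Delta>)))"

text \<open>Rule Fun2Case: clause for generator C(ys:S) containing def f(xs:T):T = e\<close>
definition fun2case :: "name set \<Rightarrow> gctx \<Rightarrow> ctx \<Rightarrow> name \<Rightarrow> name \<Rightarrow> (var \<times> ty) list \<Rightarrow> ty
                        \<Rightarrow> name \<times> (var \<times> ty) list \<times> fundef \<Rightarrow> pat \<times> exp \<Rightarrow> bool" where
  "fun2case tr \<Delta> \<Gamma> D f xs T g cl =
     (case g of (C, ps, (_, xs2, T2, e)) \<Rightarrow>
        xs2 = xs \<and> T2 = T \<and>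
        (\<exists>e'. texp tr \<Delta> (ext (ext (\<Gamma>(thisv \<mapsto> D)) ps) xs) e T e' \<and>
              cl = (PCon C (map fst ps), subst_var thisv selfv e')))"

text \<open>destructor of a transformed interface D becomes a consumer (Fun2Case / Fun2Csm)\<close>
definition dtr2csm :: "name set \<Rightarrow> gctx \<Rightarrow> ctx \<Rightarrow> name \<Rightarrow> dtr \<Rightarrow> def \<Rightarrow> bool" where
  "dtr2csm tr \<Delta> \<Gamma> D d c =
     (\<exists>gcls wcl. c = DCsm (dtr_name d) D (dtr_params d) (dtr_ret d) (gcls @ wcl) \<and>
        list_all2 (fun2case tr \<Delta> \<Gamma> D (dtr_name d) (dtr_params d) (dtr_ret d))
                  (gens_with \<Delta> D (dtr_name d)) gcls \<and>
        (case d of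
           DtrDecl _ _ _ \<Rightarrow> wcl = []
         | DtrDef _ xs T e0 \<Rightarrow> (\<exists>e0'. texp tr \<Delta> (ext (\<Gamma>(thisv \<mapsto> D)) xs) e0 T e0' \<and>
                                      wcl = [(PWild, subst_var thisv selfv e0')])))"

definition csm2dtr :: "name set \<Rightarrow> gctx \<Rightarrow> ctx \<Rightarrow> name
                       \<Rightarrow> name \<times> (var \<times> ty) list \<times> ty \<times> (pat \<times> exp) list \<Rightarrow> dtr \<Rightarrow> bool" where
  "csm2dtr tr \<Delta> \<Gamma> D c d =
     (case c of (f, xs, T, cls) \<Rightarrow>
        (case find_wild_clause cls of
           None \<Rightarrow> d = DtrDecl f xs T
         | Some (_, e) \<Rightarrow> (\<exists>e'. texp tr \<Delta> (ext (\<Gamma>(selfv \<mapsto> D)) xs) e T e' \<and>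
                                d = DtrDef f xs T (subst_var selfv thisv e'))))"

definition case2fun :: "name set \<Rightarrow> gctx \<Rightarrow> ctx \<Rightarrow> name \<Rightarrow> (var \<times> ty) list
                        \<Rightarrow> name \<times> (var \<times> ty) list \<times> ty \<times> var list \<times> exp \<Rightarrow> fundef \<Rightarrow> bool" where
  "case2fun tr \<Delta> \<Gamma> D ps c fd =
     (case c of (f, xs, T, ys, e) \<Rightarrow>
        length ys = length ps \<and>
        (\<exists>e'. texp tr \<Delta> (ext (ext (\<Gamma>(selfv \<mapsto> D)) (zip ys (map snd ps))) xs) e T e' \<and>
              fd = (f, xs, T, ren (\<lambda>v. if v = selfv then thisv
                                       else (case map_of (zip ys (map fst ps)) v of
                                               Some y \<Rightarrow> y | None \<Rightarrow> v)) e')))"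

definition tr_dtr :: "name set \<Rightarrow> gctx \<Rightarrow> ctx \<Rightarrow> name \<Rightarrow> dtr \<Rightarrow> dtr \<Rightarrow> bool" where
  "tr_dtr tr \<Delta> \<Gamma> D d d' =
     (case d of
        DtrDecl f xs T \<Rightarrow> d' = DtrDecl f xs T
      | DtrDef f xs T e \<Rightarrow> (\<exists>e'. texp tr \<Delta> (ext (\<Gamma>(thisv \<mapsto> D)) xs) e T e' \<and> d' = DtrDef f xs T e'))"

definition tr_fun :: "name set \<Rightarrow> gctx \<Rightarrow> ctx \<Rightarrow> name \<Rightarrow> (var \<times> ty) list \<Rightarrow> fundef \<Rightarrow> fundef \<Rightarrow> bool" where
  "tr_fun tr \<Delta> \<Gamma> D ps fd fd' =
     (case fd of (f, xs, T, e) \<Rightarrow>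
        (\<exists>e'. texp tr \<Delta> (ext (ext (\<Gamma>(thisv \<mapsto> D)) ps) xs) e T e' \<and> fd' = (f, xs, T, e')))"

definition tr_clause :: "name set \<Rightarrow> gctx \<Rightarrow> ctx \<Rightarrow> name \<Rightarrow> (var \<times> ty) list \<Rightarrow> ty
                         \<Rightarrow> pat \<times> exp \<Rightarrow> pat \<times> exp \<Rightarrow> bool" where
  "tr_clause tr \<Delta> \<Gamma> D xs T cl cl' =
     (case cl of
        (PWild, e) \<Rightarrow> (\<exists>e'. texp tr \<Delta> (ext (\<Gamma>(selfv \<mapsto> D)) xs) e T e' \<and> cl' = (PWild, e'))
      | (PCon C ys, e) \<Rightarrow>
          (\<exists>ps e'. DCtor C ps D \<in> set \<Delta> \<and> length ys = length ps \<and>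
                  texp tr \<Delta> (ext (ext (\<Gamma>(selfv \<mapsto> D)) (zip ys (map snd ps))) xs) e T e' \<and>
                  cl' = (PCon C ys, e')))"

fun tdef :: "name set \<Rightarrow> gctx \<Rightarrow> ctx \<Rightarrow> def \<Rightarrow> def list \<Rightarrow> bool" where
  "tdef tr \<Delta> \<Gamma> (DData D) ds =
     (if D \<in> tr then (\<exists>dtrs. ds = [DIface D dtrs] \<and>
                             list_all2 (csm2dtr tr \<Delta> \<Gamma> D) (concat (map (csm_of D) \<Delta>)) dtrs)
      else ds = [DData D])"
| "tdef tr \<Delta> \<Gamma> (DIface D dtrs) ds =
     (if D \<in> tr then (\<exists>csms. ds = DData D # csms \<and> list_all2 (dtr2csm tr \<Delta> \<Gamma> D) dtrs csms)
      else (\<exists>dtrs'. ds = [DIface D dtrs'] \<and> list_all2 (tr_dtr tr \<Delta> \<Gamma> D) dtrs dtrs'))"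
| "tdef tr \<Delta> \<Gamma> (DCtor C ps D) ds =
     (if D \<in> tr then (\<exists>fs. ds = [DGen C ps D fs] \<and>
                             list_all2 (case2fun tr \<Delta> \<Gamma> D ps) (csms_with \<Delta> D C) fs)
      else ds = [DCtor C ps D])"
| "tdef tr \<Delta> \<Gamma> (DGen C ps D fs) ds =
     (if D \<in> tr then ds = [DCtor C ps D]
      else (\<exists>fs'. ds = [DGen C ps D fs'] \<and> list_all2 (tr_fun tr \<Delta> \<Gamma> D ps) fs fs'))"
| "tdef tr \<Delta> \<Gamma> (DCsm f D xs T cls) ds =
     (if D \<in> tr then ds = []
      else (\<exists>cls'. ds = [DCsm f D xs T cls'] \<and> list_all2 (tr_clause tr \<Delta> \<Gamma> D xs T) cls cls'))"

text \<open>Program translation  \<Delta>;\<Gamma> \<turnstile> P \<Rightarrow> T0 \<leadsto> P'  (with transformed types tr)\<close>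
definition tprog :: "name set \<Rightarrow> ctx \<Rightarrow> prog \<Rightarrow> ty \<Rightarrow> prog \<Rightarrow> bool" where
  "tprog tr \<Gamma> P T0 P' =
     (wf_gctx (defs P) \<and>
      (\<exists>dss. list_all2 (tdef tr (defs P) \<Gamma>) (defs P) dss \<and> defs P' = concat dss) \<and>
      texp tr (defs P) \<Gamma> (snd P) T0 (snd P'))"

end

theory Submission
  imports Defs
begin

text \<open>
  Well-formedness makes all names of the global context distinct. Hence every lookup
  (of a generator, an interface, a consumer, or the clause of a consumer for a constructor) has
  at most one candidate, and the type-directed translation of an expression depends neither on
  the typing context nor on the expected type. The translation turns the destructor f of the
  transformed interface D into the only consumer f of the new program, whose clauses are one
  clause case C(ys) for each generator C defining f (rule Fun2Case), followed by a wildcard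
  clause for the default body of f, if any (rule Fun2Csm). If C defines f, its Fun2Case clause
  is the unique C-clause; otherwise there is no C-clause, and as Fun2Case produces no wildcard,
  csmBody falls through to the Fun2Csm clause. Either way the body found is
  [this \<mapsto> self] applied to a translation of e, which by determinism is e'.
\<close>

lemma find_eq_SomeI:
  assumes "v \<in> set xs" "P v" "\<And>x. x \<in> set xs \<Longrightarrow> P x \<Longrightarrow> x = v"
  shows "find P xs = Some v"
  using assms
proof (induction xs)
  case (Cons a xs)
  show ?case
  proof (cases "P a")
    case True
    then have "a = v" using Cons.prems(3) by (metis list.set_intros(1))
    then show ?thesis using True by simp
  next
    case False
    then have "v \<in> set xs" using Cons.prems(1,2) by auto
    moreover have "\<And>x. x \<in> set xs \<Longrightarrow> P x \<Longrightarrow> x = v"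
      using Cons.prems(3) by (metis list.set_intros(2))
    ultimately have "find P xs = Some v" using Cons.IH Cons.prems(2) by blast
    then show ?thesis using False by simp
  qed
qed simp

lemma find_append: "find P (xs @ ys) = (case find P xs of None \<Rightarrow> find P ys | Some x \<Rightarrow> Some x)"
  by (induction xs) simp_all

lemma in_set_zip_distinct_unique:
  assumes "distinct xs" "(x, y) \<in> set (zip xs ys)" "(x, y') \<in> set (zip xs ys)"
  shows "y = y'"
proof -
  have "distinct (map fst (zip xs ys))"
    using assms(1) by (simp add: map_fst_zip_take distinct_take)
  then have "map_of (zip xs ys) x = Some y" "map_of (zip xs ys) x = Some y'"
    using assms(2,3) by (blast intro: map_of_is_SomeI)+
  then show ?thesis by simp
qed

lemma list_all2_in_set_zipD: "list_all2 R xs ys \<Longrightarrow> (x, y) \<in> set (zip xs ys) \<Longrightarrow> R x y"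
  by (auto simp: list_all2_iff)

lemma list_case_eq_SomeI:
  "v \<in> set xs \<Longrightarrow> \<forall>x\<in>set xs. x = v \<Longrightarrow> (case xs of [] \<Rightarrow> None | x # _ \<Rightarrow> Some x) = Some v"
  by (cases xs) auto

lemma list_case_SomeD: "(case xs of [] \<Rightarrow> None | x # _ \<Rightarrow> Some x) = Some v \<Longrightarrow> v \<in> set xs"
  by (cases xs) auto


section \<open>Well-formed global contexts\<close>

lemma wf_gctx_name_unique:
  assumes "wf_gctx \<Delta>" "a \<in> set \<Delta>" "b \<in> set \<Delta>" "n \<in> set (def_names a)" "n \<in> set (def_names b)"
  shows "a = b"
  using assms unfolding wf_gctx_def by (induction \<Delta>) auto

lemma def_names_nonempty: "def_names a \<noteq> []"
  by (cases a) auto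

lemma wf_gctx_distinct: "wf_gctx \<Delta> \<Longrightarrow> distinct \<Delta>"
  unfolding wf_gctx_def
proof (induction \<Delta>)
  case (Cons a \<Delta>)
  obtain n where "n \<in> set (def_names a)" using def_names_nonempty by (meson last_in_set)
  then show ?case using Cons by auto
qed simp

lemma wf_gctx_distinct_dtr_names:
  "wf_gctx \<Delta> \<Longrightarrow> DIface D dtrs \<in> set \<Delta> \<Longrightarrow> distinct (map dtr_name dtrs)"
  unfolding wf_gctx_def by (induction \<Delta>) auto

lemma wf_gctx_dtr_owner_unique:
  assumes "wf_gctx \<Delta>" "DIface D dtrs \<in> set \<Delta>" "d \<in> set dtrs"
    "DIface D' dtrs' \<in> set \<Delta>" "d' \<in> set dtrs'" "dtr_name d = dtr_name d'"
  shows "D = D'"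
proof -
  have "dtr_name d \<in> set (def_names (DIface D dtrs))" "dtr_name d' \<in> set (def_names (DIface D' dtrs'))"
    using assms(3,5) by simp_all
  then show ?thesis using wf_gctx_name_unique[OF assms(1,2,4)] assms(6) by force
qed

lemma gen_info_iff: "x \<in> set (gen_info C a) \<longleftrightarrow> (\<exists>ps D fs. a = DGen C ps D fs \<and> x = (ps, D, fs))"
  by (cases a) auto

lemma iface_info_iff: "x \<in> set (iface_info D a) \<longleftrightarrow> a = DIface D x"
  by (cases a) auto

lemma csm_info_iff:
  "x \<in> set (csm_info f a) \<longleftrightarrow> (\<exists>D xs T cls. a = DCsm f D xs T cls \<and> x = (D, xs, T, cls))"
  by (cases a) auto

lemma gen_of_iff: "x \<in> set (gen_of D a) \<longleftrightarrow> (\<exists>C ps fs. a = DGen C ps D fs \<and> x = (C, ps, fs))"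
  by (cases a) auto

lemma gens_with_iff:
  "(C, ps, fd) \<in> set (gens_with \<Delta> D f) \<longleftrightarrow> (\<exists>fs. DGen C ps D fs \<in> set \<Delta> \<and> find_fun f fs = Some fd)"
proof -
  have "set (concat (map (gen_of D) \<Delta>)) = {(C, ps, fs) | C ps fs. DGen C ps D fs \<in> set \<Delta>}"
    by (auto simp: gen_of_iff simp del: gen_of.simps)
  then show ?thesis
    unfolding gens_with_def by (auto split: option.splits) (metis prod_cases4)
qed

lemma find_gen_eq_Some:
  assumes "wf_gctx \<Delta>" "DGen C ps D fs \<in> set \<Delta>"
  shows "find_gen \<Delta> C = Some (ps, D, fs)"
  unfolding find_gen_def
proof (rule list_case_eq_SomeI)
  show "(ps, D, fs) \<in> set (concat (map (gen_info C) \<Delta>))"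
    using assms(2) by (force simp: gen_info_iff simp del: gen_info.simps)
  show "\<forall>x\<in>set (concat (map (gen_info C) \<Delta>)). x = (ps, D, fs)"
    using wf_gctx_name_unique[OF assms(1) _ assms(2)]
    by (fastforce simp: gen_info_iff simp del: gen_info.simps)
qed

lemma find_iface_SomeD: "find_iface \<Delta> D = Some dtrs \<Longrightarrow> DIface D dtrs \<in> set \<Delta>"
  unfolding find_iface_def
  by (auto dest!: list_case_SomeD simp: iface_info_iff simp del: iface_info.simps)

lemma find_csm_eq_Some:
  assumes "DCsm f D xs T cls \<in> set \<Delta>"
    and "\<And>D' xs' T' cls'. DCsm f D' xs' T' cls' \<in> set \<Delta> \<Longrightarrow> DCsm f D' xs' T' cls' = DCsm f D xs T cls"
  shows "find_csm \<Delta> f = Some (D, xs, T, cls)"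
  unfolding find_csm_def
proof (rule list_case_eq_SomeI)
  show "(D, xs, T, cls) \<in> set (concat (map (csm_info f) \<Delta>))"
    using assms(1) by (force simp: csm_info_iff simp del: csm_info.simps)
  show "\<forall>x\<in>set (concat (map (csm_info f) \<Delta>)). x = (D, xs, T, cls)"
    using assms(2) by (fastforce simp: csm_info_iff simp del: csm_info.simps)
qed

lemma dtrBody_SomeE:
  assumes wf: "wf_gctx \<Delta>" and gen: "DGen C ps D fs \<in> set \<Delta>" and iface: "DIface D dtrs \<in> set \<Delta>"
    and body: "dtrBody \<Delta> f C = Some (ys, xs, e)"
  obtains (class_body) g xs' T'
    where "find_fun f fs = Some (g, xs', T', e)" "ys = map fst ps" "xs = map fst xs'"
  | (default_body) xs' T'
    where "find_fun f fs = None" "DtrDef f xs' T' e \<in> set dtrs" "ys = []" "xs = map fst xs'"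
proof (cases "find_fun f fs")
  case (Some fd)
  then show ?thesis
    using body class_body find_gen_eq_Some[OF wf gen] unfolding dtrBody_def by (cases fd) auto
next
  case None
  then obtain dtrs' f' xs' T' where dtrs': "find_iface \<Delta> D = Some dtrs'"
    and found: "find (\<lambda>d. dtr_name d = f) dtrs' = Some (DtrDef f' xs' T' e)"
    and "ys = []" "xs = map fst xs'"
    using body find_gen_eq_Some[OF wf gen] unfolding dtrBody_def
    by (auto split: option.splits dtr.splits)
  moreover have "dtrs' = dtrs"
    using wf_gctx_name_unique[OF wf find_iface_SomeD[OF dtrs'] iface, of D] by simp
  moreover have "DtrDef f' xs' T' e \<in> set dtrs'" "dtr_name (DtrDef f' xs' T' e) = f"
    using found by (auto simp: find_Some_iff) (metis dtr_name.simps(2))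
  ultimately show ?thesis
    using default_body[OF None, of xs' T'] by simp
qed


section \<open>Determinism of the expression translation\<close>

inductive_cases texp_VarE: "texp tr \<Delta> \<Gamma> (Var x) T e'"
inductive_cases texp_SelE: "texp tr \<Delta> \<Gamma> (Sel e f es) T e'"
inductive_cases texp_AppE: "texp tr \<Delta> \<Gamma> (App f e es) T e'"
inductive_cases texp_NewE: "texp tr \<Delta> \<Gamma> (New C es) T e'"
inductive_cases texp_ConE: "texp tr \<Delta> \<Gamma> (Con C es) T e'"

lemma texp_deterministic:
  assumes "wf_gctx \<Delta>" and "texp tr \<Delta> \<Gamma> e T e1" and "texp tr \<Delta> \<Gamma>' e T' e2"
  shows "e1 = e2"
  using assms(2,3,1)
proof (induction arbitrary: \<Gamma>' T' e2 rule: texp.induct)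
  case T_Var
  then show ?case by (auto elim: texp_VarE)
next
  case (T_Sel tr \<Delta> \<Gamma> e1 D e1' dtrs d f es es')
  from T_Sel.prems(1) show ?case
  proof (rule texp_SelE)
    fix D2 e1'' dtrs2 d2 es''
    assume "T' = dtr_ret d2" "e2 = (if D2 \<in> tr then App f e1'' es'' else Sel e1'' f es'')"
      "texp tr \<Delta> \<Gamma>' e1 D2 e1''" "DIface D2 dtrs2 \<in> set \<Delta>" "d2 \<in> set dtrs2" "dtr_name d2 = f"
      "length es = length (dtr_params d2)" "length es'' = length (dtr_params d2)"
      "\<forall>i<length (dtr_params d2). texp tr \<Delta> \<Gamma>' (es ! i) (snd (dtr_params d2 ! i)) (es'' ! i)"
    moreover have "D = D2"
      using wf_gctx_dtr_owner_unique[OF T_Sel.prems(2) T_Sel.hyps(2,3) calculation(4,5)]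
        T_Sel.hyps(4) calculation(6) by simp
    ultimately show ?thesis using T_Sel.IH T_Sel.prems(2) by (auto intro!: nth_equalityI)
  qed
next
  case (T_App f D xs T cls \<Delta> tr \<Gamma> e1 e1' es es')
  from T_App.prems(1) show ?case
  proof (rule texp_AppE)
    fix D2 xs2 cls2 e1'' es''
    assume "e2 = (if D2 \<in> tr then Sel e1'' f es'' else App f e1'' es'')"
      "DCsm f D2 xs2 T' cls2 \<in> set \<Delta>" "texp tr \<Delta> \<Gamma>' e1 D2 e1''" "length es = length xs2"
      "length es'' = length xs2" "\<forall>i<length xs2. texp tr \<Delta> \<Gamma>' (es ! i) (snd (xs2 ! i)) (es'' ! i)"
    moreover have "D = D2"
      using wf_gctx_name_unique[OF T_App.prems(2) T_App.hyps(1) calculation(2), of f] by simp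
    ultimately show ?thesis using T_App.IH T_App.prems(2) by (auto intro!: nth_equalityI)
  qed
next
  case (T_New C ps D fs \<Delta> es es' tr \<Gamma>)
  from T_New.prems(1) show ?case
  proof (rule texp_NewE)
    fix ps2 fs2 es''
    assume "e2 = (if T' \<in> tr then Con C es'' else New C es'')"
      "DGen C ps2 T' fs2 \<in> set \<Delta>" "length es = length ps2" "length es'' = length ps2"
      "\<forall>i<length ps2. texp tr \<Delta> \<Gamma>' (es ! i) (snd (ps2 ! i)) (es'' ! i)"
    moreover have "D = T'"
      using wf_gctx_name_unique[OF T_New.prems(2) T_New.hyps(1) calculation(2), of C] by simp
    ultimately show ?thesis using T_New.IH T_New.prems(2) by (auto intro!: nth_equalityI)
  qed
next
  case (T_Con C ps D \<Delta> es es' tr \<Gamma>)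
  from T_Con.prems(1) show ?case
  proof (rule texp_ConE)
    fix ps2 es''
    assume "e2 = (if T' \<in> tr then New C es'' else Con C es'')"
      "DCtor C ps2 T' \<in> set \<Delta>" "length es = length ps2" "length es'' = length ps2"
      "\<forall>i<length ps2. texp tr \<Delta> \<Gamma>' (es ! i) (snd (ps2 ! i)) (es'' ! i)"
    moreover have "D = T'"
      using wf_gctx_name_unique[OF T_Con.prems(2) T_Con.hyps(1) calculation(2), of C] by simp
    ultimately show ?thesis using T_Con.IH T_Con.prems(2) by (auto intro!: nth_equalityI)
  qed
qed


section \<open>Translation of a transformed interface\<close>

lemma tdef_csm_name_mem_def_names:
  assumes "tdef tr \<Delta> \<Gamma> a ds" "DCsm f D xs T cls \<in> set ds"
  shows "f \<in> set (def_names a)"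
proof (cases a)
  case (DIface D' dtrs)
  show ?thesis
  proof (cases "D' \<in> tr")
    case True
    then obtain csms where csms: "ds = DData D' # csms" "list_all2 (dtr2csm tr \<Delta> \<Gamma> D') dtrs csms"
      using assms(1) DIface by auto
    then obtain d where d: "(d, DCsm f D xs T cls) \<in> set (zip dtrs csms)"
      using assms(2) by (auto intro: in_set_impl_in_set_zip2 dest: list_all2_lengthD)
    then have "f = dtr_name d"
      using list_all2_in_set_zipD[OF csms(2) d] by (simp add: dtr2csm_def)
    then show ?thesis
      using DIface set_zip_leftD[OF d] by simp
  qed (use assms DIface in auto)
qed (use assms in \<open>auto split: if_splits\<close>)

lemma translation_gen_to_ctor:
  assumes "list_all2 (tdef tr \<Delta> \<Gamma>) \<Delta> dss" "D \<in> tr" "DGen C ps D fs \<in> set \<Delta>"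
  shows "DCtor C ps D \<in> set (concat dss)"
proof -
  obtain ds where ds: "(DGen C ps D fs, ds) \<in> set (zip \<Delta> dss)"
    using assms(1,3) by (auto intro: in_set_impl_in_set_zip1 dest: list_all2_lengthD)
  then have "ds = [DCtor C ps D]"
    using list_all2_in_set_zipD[OF assms(1) ds] assms(2) by simp
  then show ?thesis
    using set_zip_rightD[OF ds] by force
qed

lemma translation_dtr_to_csm:
  assumes wf: "wf_gctx \<Delta>" and tr: "list_all2 (tdef tr \<Delta> \<Gamma>) \<Delta> dss" and "D \<in> tr"
    and iface: "DIface D dtrs \<in> set \<Delta>" and d: "d \<in> set dtrs"
  obtains cls where "find_csm (concat dss) (dtr_name d) = Some (D, dtr_params d, dtr_ret d, cls)"
    and "DCsm (dtr_name d) D (dtr_params d) (dtr_ret d) cls \<in> set (concat dss)"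
    and "dtr2csm tr \<Delta> \<Gamma> D d (DCsm (dtr_name d) D (dtr_params d) (dtr_ret d) cls)"
proof -
  have len: "length \<Delta> = length dss"
    using tr by (rule list_all2_lengthD)
  obtain ds where ds: "(DIface D dtrs, ds) \<in> set (zip \<Delta> dss)"
    using in_set_impl_in_set_zip1[OF len iface] .
  then have "tdef tr \<Delta> \<Gamma> (DIface D dtrs) ds"
    by (rule list_all2_in_set_zipD[OF tr])
  then obtain csms where csms: "ds = DData D # csms" "list_all2 (dtr2csm tr \<Delta> \<Gamma> D) dtrs csms"
    using \<open>D \<in> tr\<close> by auto
  obtain c where c: "(d, c) \<in> set (zip dtrs csms)"
    using in_set_impl_in_set_zip1[OF list_all2_lengthD[OF csms(2)] d] .
  then have c_tr: "dtr2csm tr \<Delta> \<Gamma> D d c"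
    by (rule list_all2_in_set_zipD[OF csms(2)])
  then obtain cls where c_eq: "c = DCsm (dtr_name d) D (dtr_params d) (dtr_ret d) cls"
    unfolding dtr2csm_def by blast
  have "c \<in> set ds"
    using set_zip_rightD[OF c] csms(1) by simp
  then have c_mem: "c \<in> set (concat dss)"
    using set_zip_rightD[OF ds] by auto
  have dtrs_distinct: "distinct dtrs" and dtr_name_inj: "inj_on dtr_name (set dtrs)"
    using wf_gctx_distinct_dtr_names[OF wf iface] by (simp_all add: distinct_map)
  have unique: "DCsm (dtr_name d) D' xs' T' cls' = DCsm (dtr_name d) D (dtr_params d) (dtr_ret d) cls"
    if mem: "DCsm (dtr_name d) D' xs' T' cls' \<in> set (concat dss)" for D' xs' T' cls'
  proof -
    obtain ds' where ds': "ds' \<in> set dss" "DCsm (dtr_name d) D' xs' T' cls' \<in> set ds'"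
      using mem by auto
    obtain a where a: "(a, ds') \<in> set (zip \<Delta> dss)"
      using in_set_impl_in_set_zip2[OF len ds'(1)] .
    have "tdef tr \<Delta> \<Gamma> a ds'"
      using a by (rule list_all2_in_set_zipD[OF tr])
    then have "dtr_name d \<in> set (def_names a)"
      using ds'(2) by (rule tdef_csm_name_mem_def_names)
    moreover have "dtr_name d \<in> set (def_names (DIface D dtrs))"
      using d by simp
    ultimately have "a = DIface D dtrs"
      by (rule wf_gctx_name_unique[OF wf set_zip_leftD[OF a] iface])
    then have "ds' = ds"
      using in_set_zip_distinct_unique[OF wf_gctx_distinct[OF wf] _ ds] a by blast
    then have "DCsm (dtr_name d) D' xs' T' cls' \<in> set csms"
      using ds'(2) csms(1) by simp
    then obtain d' where d': "(d', DCsm (dtr_name d) D' xs' T' cls') \<in> set (zip dtrs csms)"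
      using in_set_impl_in_set_zip2[OF list_all2_lengthD[OF csms(2)]] by blast
    then have "dtr2csm tr \<Delta> \<Gamma> D d' (DCsm (dtr_name d) D' xs' T' cls')"
      by (rule list_all2_in_set_zipD[OF csms(2)])
    then have "dtr_name d' = dtr_name d"
      unfolding dtr2csm_def by simp
    then have "d' = d"
      using inj_onD[OF dtr_name_inj _ set_zip_leftD[OF d'] d] by blast
    then have "DCsm (dtr_name d) D' xs' T' cls' = c"
      using in_set_zip_distinct_unique[OF dtrs_distinct _ c] d' by blast
    then show ?thesis
      using c_eq by simp
  qed
  show ?thesis
    using that find_csm_eq_Some[OF c_mem[unfolded c_eq] unique] c_mem c_eq c_tr by blast
qed

lemma fun2case_clauseE:
  assumes "list_all2 (fun2case tr \<Delta> \<Gamma> D f xs T) (gens_with \<Delta> D f) gcls" "cl \<in> set gcls"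
  obtains C ps fs g e e' where "DGen C ps D fs \<in> set \<Delta>" "find_fun f fs = Some (g, xs, T, e)"
    "texp tr \<Delta> (ext (ext (\<Gamma>(thisv \<mapsto> D)) ps) xs) e T e'"
    "cl = (PCon C (map fst ps), subst_var thisv selfv e')"
proof -
  obtain gen where gen: "(gen, cl) \<in> set (zip (gens_with \<Delta> D f) gcls)"
    using in_set_impl_in_set_zip2[OF list_all2_lengthD[OF assms(1)] assms(2)] .
  obtain C ps g xs' T' e where gen_eq: "gen = (C, ps, g, xs', T', e)"
    by (cases gen) auto
  have "fun2case tr \<Delta> \<Gamma> D f xs T gen cl"
    using list_all2_in_set_zipD[OF assms(1) gen] .
  then obtain e' where "xs' = xs" "T' = T" "texp tr \<Delta> (ext (ext (\<Gamma>(thisv \<mapsto> D)) ps) xs) e T e'"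
    "cl = (PCon C (map fst ps), subst_var thisv selfv e')"
    unfolding gen_eq fun2case_def by auto
  moreover obtain fs where "DGen C ps D fs \<in> set \<Delta>" "find_fun f fs = Some (g, xs', T', e)"
    using set_zip_leftD[OF gen] unfolding gen_eq gens_with_iff by blast
  ultimately show ?thesis
    using that by blast
qed

lemma fun2case_clause_of_generator:
  assumes "list_all2 (fun2case tr \<Delta> \<Gamma> D f xs T) (gens_with \<Delta> D f) gcls"
    and "DGen C ps D fs \<in> set \<Delta>" "find_fun f fs = Some (g, xs', T', e)"
  obtains e' where "xs' = xs" "texp tr \<Delta> (ext (ext (\<Gamma>(thisv \<mapsto> D)) ps) xs) e T e'"
    "(PCon C (map fst ps), subst_var thisv selfv e') \<in> set gcls"
proof -
  have "(C, ps, g, xs', T', e) \<in> set (gens_with \<Delta> D f)"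
    using assms(2,3) gens_with_iff by blast
  then obtain cl where cl: "((C, ps, g, xs', T', e), cl) \<in> set (zip (gens_with \<Delta> D f) gcls)"
    using in_set_impl_in_set_zip1[OF list_all2_lengthD[OF assms(1)]] by blast
  then have "fun2case tr \<Delta> \<Gamma> D f xs T (C, ps, g, xs', T', e) cl"
    by (rule list_all2_in_set_zipD[OF assms(1)])
  then show ?thesis
    using that set_zip_rightD[OF cl] unfolding fun2case_def by auto
qed

lemma find_con_clause_fun2case_defined:
  assumes wf: "wf_gctx \<Delta>" and gcls: "list_all2 (fun2case tr \<Delta> \<Gamma> D f xs T) (gens_with \<Delta> D f) gcls"
    and gen: "DGen C ps D fs \<in> set \<Delta>" and has_fun: "find_fun f fs = Some (g, xs', T', e)"
    and te: "texp tr \<Delta> \<Gamma>' e T'' e'"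
  shows "xs' = xs \<and> find_con_clause C gcls = Some (PCon C (map fst ps), subst_var thisv selfv e')"
proof -
  obtain e1 where "xs' = xs" and te1: "texp tr \<Delta> (ext (ext (\<Gamma>(thisv \<mapsto> D)) ps) xs) e T e1"
    and mem: "(PCon C (map fst ps), subst_var thisv selfv e1) \<in> set gcls"
    using fun2case_clause_of_generator[OF gcls gen has_fun] .
  have "e1 = e'"
    using texp_deterministic[OF wf te1 te] .
  have unique: "cl = (PCon C (map fst ps), subst_var thisv selfv e')"
    if cl: "cl \<in> set gcls" "(\<lambda>(p, _). is_pcon C p) cl" for cl
  proof -
    obtain C0 ps0 fs0 g0 e0 e0' where gen0: "DGen C0 ps0 D fs0 \<in> set \<Delta>"
      and has_fun0: "find_fun f fs0 = Some (g0, xs, T, e0)"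
      and te0: "texp tr \<Delta> (ext (ext (\<Gamma>(thisv \<mapsto> D)) ps0) xs) e0 T e0'"
      and cl_eq: "cl = (PCon C0 (map fst ps0), subst_var thisv selfv e0')"
      using fun2case_clauseE[OF gcls cl(1)] .
    have "C0 = C"
      using cl(2) cl_eq by simp
    then have "DGen C0 ps0 D fs0 = DGen C ps D fs"
      using wf_gctx_name_unique[OF wf gen0 gen, of C] by simp
    then have "ps0 = ps" "e0 = e"
      using has_fun0 has_fun by simp_all
    then have "e0' = e'"
      using texp_deterministic[OF wf te0] te by simp
    then show ?thesis
      using cl_eq \<open>C0 = C\<close> \<open>ps0 = ps\<close> by simp
  qed
  have "find_con_clause C gcls = Some (PCon C (map fst ps), subst_var thisv selfv e')"
    unfolding find_con_clause_def
    by (rule find_eq_SomeI[OF _ _ unique]) (use mem \<open>e1 = e'\<close> in simp_all)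
  then show ?thesis
    using \<open>xs' = xs\<close> by simp
qed

lemma find_con_clause_fun2case_undefined:
  assumes wf: "wf_gctx \<Delta>" and gcls: "list_all2 (fun2case tr \<Delta> \<Gamma> D f xs T) (gens_with \<Delta> D f) gcls"
    and gen: "DGen C ps D fs \<in> set \<Delta>" and no_fun: "find_fun f fs = None"
  shows "find_con_clause C gcls = None"
  unfolding find_con_clause_def find_None_iff
proof clarify
  fix p b assume cl: "(p, b) \<in> set gcls" and "is_pcon C p"
  obtain C0 ps0 fs0 g0 e0 e0' where gen0: "DGen C0 ps0 D fs0 \<in> set \<Delta>"
    and has_fun0: "find_fun f fs0 = Some (g0, xs, T, e0)"
    and cl_eq: "(p, b) = (PCon C0 (map fst ps0), subst_var thisv selfv e0')"
    using fun2case_clauseE[OF gcls cl] .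
  have "C0 = C"
    using \<open>is_pcon C p\<close> cl_eq by simp
  then have "fs0 = fs"
    using wf_gctx_name_unique[OF wf gen0 gen, of C] by simp
  then show False
    using has_fun0 no_fun by simp
qed

lemma find_wild_clause_fun2case:
  assumes "list_all2 (fun2case tr \<Delta> \<Gamma> D f xs T) (gens_with \<Delta> D f) gcls"
  shows "find_wild_clause gcls = None"
  unfolding find_wild_clause_def find_None_iff
proof clarify
  fix b assume "(PWild, b) \<in> set gcls"
  then show False
    by (rule fun2case_clauseE[OF assms]) simp
qed

lemma csmBody_translation:
  assumes wf: "wf_gctx \<Delta>" and tr: "list_all2 (tdef tr \<Delta> \<Gamma>) \<Delta> dss" and "D \<in> tr"
    and gen: "DGen C ps D fs \<in> set \<Delta>" and iface: "DIface D dtrs \<in> set \<Delta>"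
    and d: "d \<in> set dtrs" "dtr_name d = f"
    and body: "dtrBody \<Delta> f C = Some (ys, xs, e)" and te: "texp tr \<Delta> \<Gamma>' e T e'"
  shows "csmBody (concat dss) f C = Some (ys, xs, subst_var thisv selfv e')"
proof -
  obtain cls where find: "find_csm (concat dss) f = Some (D, dtr_params d, dtr_ret d, cls)"
    and "dtr2csm tr \<Delta> \<Gamma> D d (DCsm f D (dtr_params d) (dtr_ret d) cls)"
    using translation_dtr_to_csm[OF wf tr \<open>D \<in> tr\<close> iface d(1)] d(2) by blast
  then obtain gcls wcl where cls: "cls = gcls @ wcl"
    and gcls: "list_all2 (fun2case tr \<Delta> \<Gamma> D f (dtr_params d) (dtr_ret d)) (gens_with \<Delta> D f) gcls"
    and wcl: "case d of DtrDecl _ _ _ \<Rightarrow> wcl = []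
      | DtrDef _ xs T e0 \<Rightarrow> (\<exists>e0'. texp tr \<Delta> (ext (\<Gamma>(thisv \<mapsto> D)) xs) e0 T e0' \<and>
                                  wcl = [(PWild, subst_var thisv selfv e0')])"
    unfolding dtr2csm_def using d(2) by auto
  from wf gen iface body show ?thesis
  proof (cases rule: dtrBody_SomeE)
    case (class_body g xs' T')
    then have "xs' = dtr_params d"
      and "find_con_clause C gcls = Some (PCon C (map fst ps), subst_var thisv selfv e')"
      using find_con_clause_fun2case_defined[OF wf gcls gen _ te] by blast+
    then show ?thesis
      using class_body find cls by (simp add: csmBody_def find_con_clause_def find_append)
  next
    case (default_body xs' T')
    have "d = DtrDef f xs' T' e"
      using inj_onD[of dtr_name, OF _ _ d(1) default_body(2)] wf_gctx_distinct_dtr_names[OF wf iface] d(2)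
      by (simp add: distinct_map)
    then obtain e0' where "texp tr \<Delta> (ext (\<Gamma>(thisv \<mapsto> D)) xs') e T' e0'"
      and wcl_eq: "wcl = [(PWild, subst_var thisv selfv e0')]"
      using wcl by auto
    then have "e0' = e'"
      using texp_deterministic[OF wf _ te] by blast
    moreover have "find_con_clause C gcls = None"
      using find_con_clause_fun2case_undefined[OF wf gcls gen default_body(1)] .
    moreover have "find_wild_clause gcls = None"
      using find_wild_clause_fun2case[OF gcls] .
    ultimately show ?thesis
      using default_body find cls wcl_eq \<open>d = DtrDef f xs' T' e\<close>
      by (simp add: csmBody_def find_con_clause_def find_wild_clause_def find_append)
  qed
qed

theorem lemmaB6:
  assumes "tprog tr \<Gamma> P T0 P'"
    and "D \<in> tr"
    and "C \<in> Gen (defs P) D"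
    and "f \<in> Dtr (defs P) D"
    and "dtrBody (defs P) f C = Some (ys, xs, e)"
    and "texp tr (defs P) \<Gamma> e T e'"
  shows "C \<in> Ctr (defs P') D \<and> f \<in> Csm (defs P') D \<and>
         csmBody (defs P') f C = Some (ys, xs, subst_var thisv selfv e')"
proof -
  obtain dss where wf: "wf_gctx (defs P)" and tr: "list_all2 (tdef tr (defs P) \<Gamma>) (defs P) dss"
    and P': "defs P' = concat dss"
    using assms(1) unfolding tprog_def by blast
  obtain ps fs where gen: "DGen C ps D fs \<in> set (defs P)"
    using assms(3) unfolding Gen_def by blast
  obtain dtrs d where iface: "DIface D dtrs \<in> set (defs P)" and d: "d \<in> set dtrs" "dtr_name d = f"
    using assms(4) unfolding Dtr_def by blast
  have "C \<in> Ctr (defs P') D"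
    using translation_gen_to_ctor[OF tr assms(2) gen] unfolding P' Ctr_def by blast
  moreover have "f \<in> Csm (defs P') D"
    using translation_dtr_to_csm[OF wf tr assms(2) iface d(1)] d(2) unfolding P' Csm_def by blast
  moreover have "csmBody (defs P') f C = Some (ys, xs, subst_var thisv selfv e')"
    using csmBody_translation[OF wf tr assms(2) gen iface d assms(5,6)] unfolding P' .
  ultimately show ?thesis by blast
qed

end
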